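(* Let $h(t)\in\mathbb{R}^l$ and $z(t)\in\mathbb{R}^p$ be processes such that $s(t)=\begin{bmatrix} z(t)\\ h(t)\end{bmatrix}$ is RC and, for every $t\in\mathbb{Z}$, all coordinates of $z(t)$ are orthogonal to $H^h_t$. Then for every $w\in\Sigma^+$ and every $t\in\mathbb{Z}$, all coordinates of $z^z_w(t)$ are orthogonal to $H^h_{t,w}$.
   Context: Setting (RC framework). All random variables on one probability space. $\Sigma$ finite alphabet, $\Sigma^*$ finite words ($\epsilon$ empty), $\Sigma^+=\Sigma^*\setminus\{\epsilon\}$, $|w|$ length. Fix $p_\sigma>0$; $p_\epsilon=1$, $p_{\sigma_1\cdots\sigma_k}=\prod_i p_{\sigma_i}$. Inputs: scalar processes $u_\sigma(t)$ with $\sum_\sigma\alpha_\sigma u_\sigma(t)=1$ for constants $\alpha_\sigma$, all first/second moments of $u_w(t)$ finite, where $u_w(t)=u_{\sigma_1}(t-k+1)u_{\sigma_2}(t-k+2)\cdots u_{\sigma_k}(t)$ for $w=\sigma_1\cdots\sigma_k$. $z^r_w(t)=r(t-|w|)u_w(t-1)/\sqrt{p_w}$. Admissible set $L\subseteq\Sigma^+$: $\Sigma\subseteq L$; $u_w=0$ a.s. for $w\notin L$; for some $S\subseteq\Sigma\times\Sigma$, a word of length $>1$ is in $L$ iff all its consecutive letter pairs are in $S$. A process $r$ is RC if: (1) $E[r(t)]=0$, $E[z^r_w(t)]=0$, $E[r(t)z^r_w(t)^T]$, $E[z^r_w(t)z^r_v(t)^T]$ finite and independent of $t$; $T^r_{w,v}:=E[z^r_w(t)z^r_v(t)^T]$,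 $\Lambda^r_w:=E[r(t)z^r_w(t)^T]$; (2) $T^r_{\sigma,\sigma'}=0$ for $\sigma\ne\sigma'$; $T^r_{w\sigma,v\sigma'}=0$ for $\sigma\neq\sigma'$ and $T^r_{w\sigma,v\sigma}=T^r_{w,v}$ if $w\sigma\in L$ or $v\sigma\in L$; $T^r_{w\sigma,\sigma'}=0$ for $\sigma\ne\sigma'$ and $T^r_{w\sigma,\sigma}=(\Lambda^r_w)^T$; (3) $T^r_{w,v}=0$ if $w\notin L$ or $v\notin L$; if $w\sigma\in L$ and $v\sigma\notin L$ then $T^r_{v,w}=T^r_{w,v}=0$. Hilbert space generated by random vectors = mean-square closure of span of their coordinates. $H^h_t$: generated by $\{z^h_v(t)\mid v\in\Sigma^+\}$; $H^h_{t,w}$: generated by $\{z^h_{vw}(t)\mid v\in\Sigma^+\}$. *)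

theory Defs
  imports "HOL-Probability.Probability"
begin

text \<open>Words over the alphabet 'sigma are lists; the word sigma1...sigmak is the list
  [sigma1,...,sigmak]; appending a letter on the right is w @ [sigma].\<close>

definition pw :: "('s \<Rightarrow> real) \<Rightarrow> 's list \<Rightarrow> real" where
  "pw p w = (\<Prod>i<length w. p (w ! i))"

definition uw :: "('s \<Rightarrow> int \<Rightarrow> 'a \<Rightarrow> real) \<Rightarrow> 's list \<Rightarrow> int \<Rightarrow> 'a \<Rightarrow> real" where
  "uw u w t \<omega> = (\<Prod>i<length w. u (w ! i) (t - int (length w) + 1 + int i) \<omega>)"

definition zr :: "('s \<Rightarrow> real) \<Rightarrow> ('s \<Rightarrow> int \<Rightarrow> 'a \<Rightarrow> real) \<Rightarrow> (int \<Rightarrow> 'a \<Rightarrow> real^'n)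
    \<Rightarrow> 's list \<Rightarrow> int \<Rightarrow> 'a \<Rightarrow> real^'n" where
  "zr p u r w t \<omega> = (uw u w (t - 1) \<omega> / sqrt (pw p w)) *\<^sub>R r (t - int (length w)) \<omega>"

definition inputs_ok :: "'a measure \<Rightarrow> ('s::finite \<Rightarrow> real) \<Rightarrow> ('s \<Rightarrow> int \<Rightarrow> 'a \<Rightarrow> real) \<Rightarrow> bool" where
  "inputs_ok M p u \<longleftrightarrow>
     (\<forall>\<sigma>. p \<sigma> > 0) \<and>
     (\<exists>\<alpha>::'s \<Rightarrow> real. \<forall>t. \<forall>\<omega>\<in>space M. (\<Sum>\<sigma>\<in>UNIV. \<alpha> \<sigma> * u \<sigma> t \<omega>) = 1) \<and>
     (\<forall>w t. integrable M (uw u w t) \<and> integrable M (\<lambda>\<omega>. (uw u w t \<omega>)\<^sup>2))"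

definition admissible :: "'a measure \<Rightarrow> ('s \<Rightarrow> int \<Rightarrow> 'a \<Rightarrow> real) \<Rightarrow> 's list set \<Rightarrow> bool" where
  "admissible M u L \<longleftrightarrow>
     [] \<notin> L \<and>
     (\<forall>\<sigma>. [\<sigma>] \<in> L) \<and>
     (\<forall>w. w \<noteq> [] \<and> w \<notin> L \<longrightarrow> (\<forall>t. AE \<omega> in M. uw u w t \<omega> = 0)) \<and>
     (\<exists>S. \<forall>w. length w > 1 \<longrightarrow>
            (w \<in> L \<longleftrightarrow> (\<forall>i. i + 1 < length w \<longrightarrow> (w ! i, w ! (i + 1)) \<in> S)))"

text \<open>T^r_{w,v} = E[z^r_w(t) z^r_v(t)^T] and Lambda^r_w = E[r(t) z^r_w(t)^T] (evaluated at t = 0;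
  independence of t is part of the RC definition).\<close>
definition Tmat :: "'a measure \<Rightarrow> ('s \<Rightarrow> real) \<Rightarrow> ('s \<Rightarrow> int \<Rightarrow> 'a \<Rightarrow> real) \<Rightarrow> (int \<Rightarrow> 'a \<Rightarrow> real^'n)
    \<Rightarrow> 's list \<Rightarrow> 's list \<Rightarrow> real^'n^'n" where
  "Tmat M p u r w v = (\<chi> i j. integral\<^sup>L M (\<lambda>\<omega>. zr p u r w 0 \<omega> $ i * zr p u r v 0 \<omega> $ j))"

definition Lmat :: "'a measure \<Rightarrow> ('s \<Rightarrow> real) \<Rightarrow> ('s \<Rightarrow> int \<Rightarrow> 'a \<Rightarrow> real) \<Rightarrow> (int \<Rightarrow> 'a \<Rightarrow> real^'n)
    \<Rightarrow> 's list \<Rightarrow> real^'n^'n" where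
  "Lmat M p u r w = (\<chi> i j. integral\<^sup>L M (\<lambda>\<omega>. r 0 \<omega> $ i * zr p u r w 0 \<omega> $ j))"

definition RC :: "'a measure \<Rightarrow> ('s \<Rightarrow> real) \<Rightarrow> ('s \<Rightarrow> int \<Rightarrow> 'a \<Rightarrow> real) \<Rightarrow> 's list set
    \<Rightarrow> (int \<Rightarrow> 'a \<Rightarrow> real^'n) \<Rightarrow> bool" where
  "RC M p u L r \<longleftrightarrow>
     \<comment> \<open>(1)\<close>
     (\<forall>t i. integrable M (\<lambda>\<omega>. r t \<omega> $ i) \<and> integral\<^sup>L M (\<lambda>\<omega>. r t \<omega> $ i) = 0) \<and>
     (\<forall>w t i. w \<noteq> [] \<longrightarrow> integrable M (\<lambda>\<omega>. zr p u r w t \<omega> $ i) \<and>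
                           integral\<^sup>L M (\<lambda>\<omega>. zr p u r w t \<omega> $ i) = 0) \<and>
     (\<forall>w t i j. w \<noteq> [] \<longrightarrow> integrable M (\<lambda>\<omega>. r t \<omega> $ i * zr p u r w t \<omega> $ j) \<and>
        integral\<^sup>L M (\<lambda>\<omega>. r t \<omega> $ i * zr p u r w t \<omega> $ j)
        = integral\<^sup>L M (\<lambda>\<omega>. r 0 \<omega> $ i * zr p u r w 0 \<omega> $ j)) \<and>
     (\<forall>w v t i j. w \<noteq> [] \<longrightarrow> v \<noteq> [] \<longrightarrow>
        integrable M (\<lambda>\<omega>. zr p u r w t \<omega> $ i * zr p u r v t \<omega> $ j) \<and>
        integral\<^sup>L M (\<lambda>\<omega>. zr p u r w t \<omega> $ i * zr p u r v t \<omega> $ j)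
        = integral\<^sup>L M (\<lambda>\<omega>. zr p u r w 0 \<omega> $ i * zr p u r v 0 \<omega> $ j)) \<and>
     \<comment> \<open>(2)\<close>
     (\<forall>\<sigma> \<sigma>'. \<sigma> \<noteq> \<sigma>' \<longrightarrow> Tmat M p u r [\<sigma>] [\<sigma>'] = 0) \<and>
     (\<forall>w v \<sigma> \<sigma>'. w \<noteq> [] \<longrightarrow> v \<noteq> [] \<longrightarrow> \<sigma> \<noteq> \<sigma>' \<longrightarrow>
        Tmat M p u r (w @ [\<sigma>]) (v @ [\<sigma>']) = 0) \<and>
     (\<forall>w v \<sigma>. w \<noteq> [] \<longrightarrow> v \<noteq> [] \<longrightarrow> (w @ [\<sigma>] \<in> L \<or> v @ [\<sigma>] \<in> L) \<longrightarrow>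
        Tmat M p u r (w @ [\<sigma>]) (v @ [\<sigma>]) = Tmat M p u r w v) \<and>
     (\<forall>w \<sigma> \<sigma>'. w \<noteq> [] \<longrightarrow> \<sigma> \<noteq> \<sigma>' \<longrightarrow> Tmat M p u r (w @ [\<sigma>]) [\<sigma>'] = 0) \<and>
     (\<forall>w \<sigma>. w \<noteq> [] \<longrightarrow> Tmat M p u r (w @ [\<sigma>]) [\<sigma>] = transpose (Lmat M p u r w)) \<and>
     \<comment> \<open>(3)\<close>
     (\<forall>w v. w \<noteq> [] \<longrightarrow> v \<noteq> [] \<longrightarrow> (w \<notin> L \<or> v \<notin> L) \<longrightarrow> Tmat M p u r w v = 0) \<and>
     (\<forall>w v \<sigma>. w \<noteq> [] \<longrightarrow> v \<noteq> [] \<longrightarrow> w @ [\<sigma>] \<in> L \<longrightarrow> v @ [\<sigma>] \<notin> L \<longrightarrow>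
        Tmat M p u r v w = 0 \<and> Tmat M p u r w v = 0)"

definition lin_span_rv :: "('a \<Rightarrow> real) set \<Rightarrow> ('a \<Rightarrow> real) set" where
  "lin_span_rv G = {(\<lambda>\<omega>. \<Sum>i<n. c i * g i \<omega>) | (n::nat) (c::nat \<Rightarrow> real) (g::nat \<Rightarrow> 'a \<Rightarrow> real). \<forall>i<n. g i \<in> G}"

definition gen_hilbert :: "'a measure \<Rightarrow> ('a \<Rightarrow> real) set \<Rightarrow> ('a \<Rightarrow> real) set" where
  "gen_hilbert M G = {X. X \<in> borel_measurable M \<and> integrable M (\<lambda>\<omega>. (X \<omega>)\<^sup>2) \<and>
     (\<exists>Y. (\<forall>n. Y n \<in> lin_span_rv G) \<and>
          (\<lambda>n. integral\<^sup>L M (\<lambda>\<omega>. (X \<omega> - Y n \<omega>)\<^sup>2)) \<longlonglongrightarrow> 0)}"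

definition orth_to :: "'a measure \<Rightarrow> ('a \<Rightarrow> real) \<Rightarrow> ('a \<Rightarrow> real) set \<Rightarrow> bool" where
  "orth_to M X H \<longleftrightarrow> (\<forall>Y\<in>H. integrable M (\<lambda>\<omega>. X \<omega> * Y \<omega>) \<and> integral\<^sup>L M (\<lambda>\<omega>. X \<omega> * Y \<omega>) = 0)"

definition Hspace :: "'a measure \<Rightarrow> ('s \<Rightarrow> real) \<Rightarrow> ('s \<Rightarrow> int \<Rightarrow> 'a \<Rightarrow> real)
    \<Rightarrow> (int \<Rightarrow> 'a \<Rightarrow> real^'n) \<Rightarrow> int \<Rightarrow> ('a \<Rightarrow> real) set" where
  "Hspace M p u h t = gen_hilbert M {(\<lambda>\<omega>. zr p u h v t \<omega> $ i) | v i. v \<noteq> []}"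

definition Hspace_w :: "'a measure \<Rightarrow> ('s \<Rightarrow> real) \<Rightarrow> ('s \<Rightarrow> int \<Rightarrow> 'a \<Rightarrow> real)
    \<Rightarrow> (int \<Rightarrow> 'a \<Rightarrow> real^'n) \<Rightarrow> int \<Rightarrow> 's list \<Rightarrow> ('a \<Rightarrow> real) set" where
  "Hspace_w M p u h t w = gen_hilbert M {(\<lambda>\<omega>. zr p u h (v @ w) t \<omega> $ i) | v i. v \<noteq> []}"

definition stack :: "(int \<Rightarrow> 'a \<Rightarrow> real^'p) \<Rightarrow> (int \<Rightarrow> 'a \<Rightarrow> real^'l) \<Rightarrow> int \<Rightarrow> 'a \<Rightarrow> real^('p + 'l)" where
  "stack z h t \<omega> = (\<chi> k. case k of Inl i \<Rightarrow> z t \<omega> $ i | Inr j \<Rightarrow> h t \<omega> $ j)"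

end

theory Submission
  imports Defs
begin

text \<open>Orthogonality to a set of square-integrable variables passes to its linear span and,
  by continuity of the L2 inner product, to the mean-square closure; so it suffices to show that
  \<open>z^z_w(t)\<close> is orthogonal to every generator \<open>z^h_{vw}(t)\<close>. By stationarity that correlation
  is the \<open>(h, z)\<close> block of \<open>T^s_{vw,w}\<close>. Stripping the last letter of \<open>w\<close> with the RC
  relations (\<open>T_{w'\<sigma>,v'\<sigma>} = T_{w',v'}\<close> if one of the words is admissible, and \<open>0\<close> if neither is)
  reduces it to \<open>T^s_{v\<sigma>,\<sigma>} = (\<Lambda>^s_v)\<^sup>T\<close>, whose block \<open>E[z(0) z^h_v(0)\<^sup>T]\<close> vanishes because
  \<open>z(0)\<close> is orthogonal to \<open>H^h_0\<close>.\<close>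

lemma integrable_mult_if_square_integrable:
  fixes X Y :: "'a \<Rightarrow> real"
  assumes [measurable]: "X \<in> borel_measurable M" "Y \<in> borel_measurable M"
    and "integrable M (\<lambda>\<omega>. (X \<omega>)\<^sup>2)" "integrable M (\<lambda>\<omega>. (Y \<omega>)\<^sup>2)"
  shows "integrable M (\<lambda>\<omega>. X \<omega> * Y \<omega>)"
proof (rule Bochner_Integration.integrable_bound[of _ "\<lambda>\<omega>. (X \<omega>)\<^sup>2 + (Y \<omega>)\<^sup>2"])
  show "integrable M (\<lambda>\<omega>. (X \<omega>)\<^sup>2 + (Y \<omega>)\<^sup>2)"
    using assms by auto
  have "\<bar>X \<omega> * Y \<omega>\<bar> \<le> (X \<omega>)\<^sup>2 + (Y \<omega>)\<^sup>2" for \<omega>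
  proof -
    have "\<bar>X \<omega> * Y \<omega>\<bar> \<le> 2 * \<bar>X \<omega> * Y \<omega>\<bar>"
      by simp
    also have "\<dots> \<le> (X \<omega>)\<^sup>2 + (Y \<omega>)\<^sup>2"
      using sum_squares_bound[of "\<bar>X \<omega>\<bar>" "\<bar>Y \<omega>\<bar>"] by (simp add: abs_mult mult.assoc)
    finally show ?thesis .
  qed
  then show "AE \<omega> in M. norm (X \<omega> * Y \<omega>) \<le> norm ((X \<omega>)\<^sup>2 + (Y \<omega>)\<^sup>2)"
    by simp
qed measurable

lemma Cauchy_Schwarz_integral:
  fixes X Y :: "'a \<Rightarrow> real"
  assumes [measurable]: "X \<in> borel_measurable M" "Y \<in> borel_measurable M"
    and X2: "integrable M (\<lambda>\<omega>. (X \<omega>)\<^sup>2)" and Y2: "integrable M (\<lambda>\<omega>. (Y \<omega>)\<^sup>2)"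
  shows "(\<integral>\<omega>. X \<omega> * Y \<omega> \<partial>M)\<^sup>2 \<le> (\<integral>\<omega>. (X \<omega>)\<^sup>2 \<partial>M) * (\<integral>\<omega>. (Y \<omega>)\<^sup>2 \<partial>M)"
proof -
  define A B C where "A = (\<integral>\<omega>. (X \<omega>)\<^sup>2 \<partial>M)" and "B = (\<integral>\<omega>. (Y \<omega>)\<^sup>2 \<partial>M)"
    and "C = (\<integral>\<omega>. X \<omega> * Y \<omega> \<partial>M)"
  have XY: "integrable M (\<lambda>\<omega>. X \<omega> * Y \<omega>)"
    using integrable_mult_if_square_integrable[OF assms] .
  have quadratic_nonneg: "0 \<le> s\<^sup>2 * A + 2 * s * C + B" for s
  proof -
    have "0 \<le> (\<integral>\<omega>. (s * X \<omega> + Y \<omega>)\<^sup>2 \<partial>M)"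
      by simp
    also have "(\<lambda>\<omega>. (s * X \<omega> + Y \<omega>)\<^sup>2) = (\<lambda>\<omega>. s\<^sup>2 * (X \<omega>)\<^sup>2 + 2 * s * (X \<omega> * Y \<omega>) + (Y \<omega>)\<^sup>2)"
      by (simp add: power2_eq_square algebra_simps)
    also have "(\<integral>\<omega>. s\<^sup>2 * (X \<omega>)\<^sup>2 + 2 * s * (X \<omega> * Y \<omega>) + (Y \<omega>)\<^sup>2 \<partial>M) = s\<^sup>2 * A + 2 * s * C + B"
      using X2 Y2 XY unfolding A_def B_def C_def
      by (simp only: Bochner_Integration.integral_add Bochner_Integration.integral_mult_right_zero
          Bochner_Integration.integrable_add integrable_mult_right)
    finally show ?thesis .
  qed
  have "C\<^sup>2 \<le> A * B"
  proof (cases "A = 0")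
    case True
    have "C = 0"
    proof (rule ccontr)
      assume "C \<noteq> 0"
      then have "2 * (- (B + 1) / (2 * C)) * C = - (B + 1)"
        by simp
      then show False
        using quadratic_nonneg[of "- (B + 1) / (2 * C)"] True by simp
    qed
    with True show ?thesis
      by simp
  next
    case False
    moreover have "A \<ge> 0"
      by (simp add: A_def)
    ultimately have "A > 0"
      by simp
    have "(- C / A)\<^sup>2 * A + 2 * (- C / A) * C + B = B - C\<^sup>2 / A"
      using \<open>A > 0\<close> by (simp add: power2_eq_square)
    then have "C\<^sup>2 / A \<le> B"
      using quadratic_nonneg[of "- C / A"] by simp
    with \<open>A > 0\<close> show ?thesis
      by (simp add: pos_divide_le_eq mult.commute)
  qed
  then show ?thesis
    by (simp only: A_def B_def C_def)
qed

lemma integral_mult_tendsto_zero: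
  fixes X :: "'a \<Rightarrow> real" and Z :: "nat \<Rightarrow> 'a \<Rightarrow> real"
  assumes "X \<in> borel_measurable M" "integrable M (\<lambda>\<omega>. (X \<omega>)\<^sup>2)"
    and "\<And>n. Z n \<in> borel_measurable M" "\<And>n. integrable M (\<lambda>\<omega>. (Z n \<omega>)\<^sup>2)"
    and "(\<lambda>n. \<integral>\<omega>. (Z n \<omega>)\<^sup>2 \<partial>M) \<longlonglongrightarrow> 0"
  shows "(\<lambda>n. \<integral>\<omega>. X \<omega> * Z n \<omega> \<partial>M) \<longlonglongrightarrow> 0"
proof (rule tendsto_0_le)
  show "(\<lambda>n. sqrt (\<integral>\<omega>. (Z n \<omega>)\<^sup>2 \<partial>M)) \<longlonglongrightarrow> 0"
    using tendsto_real_sqrt[OF assms(5)] by simp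
  have "\<bar>\<integral>\<omega>. X \<omega> * Z n \<omega> \<partial>M\<bar> \<le> sqrt (\<integral>\<omega>. (Z n \<omega>)\<^sup>2 \<partial>M) * sqrt (\<integral>\<omega>. (X \<omega>)\<^sup>2 \<partial>M)" for n
    using real_sqrt_le_mono[OF Cauchy_Schwarz_integral[OF assms(1,3,2,4)]]
    by (simp add: real_sqrt_mult mult.commute)
  then show "\<forall>\<^sub>F n in sequentially. norm (\<integral>\<omega>. X \<omega> * Z n \<omega> \<partial>M)
      \<le> norm (sqrt (\<integral>\<omega>. (Z n \<omega>)\<^sup>2 \<partial>M)) * sqrt (\<integral>\<omega>. (X \<omega>)\<^sup>2 \<partial>M)"
    by simp
qed

lemma lin_span_rvE:
  assumes "Y \<in> lin_span_rv G"
  obtains c :: "nat \<Rightarrow> real" and g :: "nat \<Rightarrow> 'a \<Rightarrow> real" and n :: nat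
  where "Y = (\<lambda>\<omega>. \<Sum>i<n. c i * g i \<omega>)" and "\<And>i. i < n \<Longrightarrow> g i \<in> G"
  using assms unfolding lin_span_rv_def by blast

lemma lin_span_rv_square_integrable:
  assumes "\<And>g. g \<in> G \<Longrightarrow> g \<in> borel_measurable M"
    and "\<And>g g'. g \<in> G \<Longrightarrow> g' \<in> G \<Longrightarrow> integrable M (\<lambda>\<omega>. g \<omega> * g' \<omega>)"
    and "Y \<in> lin_span_rv G"
  shows "Y \<in> borel_measurable M" and "integrable M (\<lambda>\<omega>. (Y \<omega>)\<^sup>2)"
proof -
  obtain c g and n :: nat
    where Y: "Y = (\<lambda>\<omega>. \<Sum>i<n. c i * g i \<omega>)" and g: "\<And>i. i < n \<Longrightarrow> g i \<in> G"
    using assms(3) lin_span_rvE by blast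
  show "Y \<in> borel_measurable M"
    unfolding Y using g assms(1) by (auto intro!: borel_measurable_sum borel_measurable_times)
  have "integrable M (\<lambda>\<omega>. \<Sum>i<n. \<Sum>k<n. c i * c k * (g i \<omega> * g k \<omega>))"
    using g assms(2) by (intro Bochner_Integration.integrable_sum integrable_mult_right) auto
  moreover have "(\<lambda>\<omega>. (Y \<omega>)\<^sup>2) = (\<lambda>\<omega>. \<Sum>i<n. \<Sum>k<n. c i * c k * (g i \<omega> * g k \<omega>))"
    unfolding Y power2_eq_square sum_product by (simp add: algebra_simps)
  ultimately show "integrable M (\<lambda>\<omega>. (Y \<omega>)\<^sup>2)"
    by simp
qed

lemma orth_to_lin_span_rv:
  assumes "orth_to M X G"
  shows "orth_to M X (lin_span_rv G)"
  unfolding orth_to_def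
proof
  fix Y assume "Y \<in> lin_span_rv G"
  then obtain c g and n :: nat
    where Y: "Y = (\<lambda>\<omega>. \<Sum>i<n. c i * g i \<omega>)" and g: "\<And>i. i < n \<Longrightarrow> g i \<in> G"
    using lin_span_rvE by blast
  have XY: "(\<lambda>\<omega>. X \<omega> * Y \<omega>) = (\<lambda>\<omega>. \<Sum>i<n. c i * (X \<omega> * g i \<omega>))"
    unfolding Y sum_distrib_left by (simp add: algebra_simps)
  have integrable: "integrable M (\<lambda>\<omega>. X \<omega> * g i \<omega>)" and orthogonal: "(\<integral>\<omega>. X \<omega> * g i \<omega> \<partial>M) = 0"
    if "i < n" for i
    using assms g[OF that] unfolding orth_to_def by blast+
  have "integrable M (\<lambda>\<omega>. \<Sum>i<n. c i * (X \<omega> * g i \<omega>))"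
    using integrable by (intro Bochner_Integration.integrable_sum integrable_mult_right) simp
  moreover have "(\<integral>\<omega>. (\<Sum>i<n. c i * (X \<omega> * g i \<omega>)) \<partial>M) = 0"
    using integrable orthogonal by (subst Bochner_Integration.integral_sum) simp_all
  ultimately show "integrable M (\<lambda>\<omega>. X \<omega> * Y \<omega>) \<and> (\<integral>\<omega>. X \<omega> * Y \<omega> \<partial>M) = 0"
    unfolding XY by simp
qed

lemma orth_to_gen_hilbert:
  assumes X: "X \<in> borel_measurable M" and X2: "integrable M (\<lambda>\<omega>. (X \<omega>)\<^sup>2)"
    and G_measurable: "\<And>g. g \<in> G \<Longrightarrow> g \<in> borel_measurable M"
    and G_products: "\<And>g g'. g \<in> G \<Longrightarrow> g' \<in> G \<Longrightarrow> integrable M (\<lambda>\<omega>. g \<omega> * g' \<omega>)"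
    and orth: "orth_to M X G"
  shows "orth_to M X (gen_hilbert M G)"
  unfolding orth_to_def
proof
  fix Y assume "Y \<in> gen_hilbert M G"
  then obtain Yn where Y: "Y \<in> borel_measurable M" and Y2: "integrable M (\<lambda>\<omega>. (Y \<omega>)\<^sup>2)"
    and Yn: "\<And>n. Yn n \<in> lin_span_rv G"
    and approx: "(\<lambda>n. \<integral>\<omega>. (Y \<omega> - Yn n \<omega>)\<^sup>2 \<partial>M) \<longlonglongrightarrow> 0"
    unfolding gen_hilbert_def by blast
  note Yn_square_integrable = lin_span_rv_square_integrable[OF G_measurable G_products Yn]
  have XY: "integrable M (\<lambda>\<omega>. X \<omega> * Y \<omega>)"
    using integrable_mult_if_square_integrable[OF X Y X2 Y2] .
  have residual: "(\<lambda>\<omega>. Y \<omega> - Yn n \<omega>) \<in> borel_measurable M"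
    "integrable M (\<lambda>\<omega>. (Y \<omega> - Yn n \<omega>)\<^sup>2)" for n
  proof -
    show "(\<lambda>\<omega>. Y \<omega> - Yn n \<omega>) \<in> borel_measurable M"
      using Y Yn_square_integrable(1) by (rule borel_measurable_diff)
    have "integrable M (\<lambda>\<omega>. (Y \<omega>)\<^sup>2 + (Yn n \<omega>)\<^sup>2 - 2 * (Y \<omega> * Yn n \<omega>))"
      using Y2 Yn_square_integrable(2)
        integrable_mult_if_square_integrable[OF Y Yn_square_integrable(1) Y2 Yn_square_integrable(2)]
      by (intro Bochner_Integration.integrable_diff Bochner_Integration.integrable_add integrable_mult_right)
    moreover have "(\<lambda>\<omega>. (Y \<omega> - Yn n \<omega>)\<^sup>2) = (\<lambda>\<omega>. (Y \<omega>)\<^sup>2 + (Yn n \<omega>)\<^sup>2 - 2 * (Y \<omega> * Yn n \<omega>))"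
      by (simp add: power2_diff mult.assoc)
    ultimately show "integrable M (\<lambda>\<omega>. (Y \<omega> - Yn n \<omega>)\<^sup>2)"
      by simp
  qed
  have XYn: "integrable M (\<lambda>\<omega>. X \<omega> * Yn n \<omega>)" "(\<integral>\<omega>. X \<omega> * Yn n \<omega> \<partial>M) = 0" for n
    using orth_to_lin_span_rv[OF orth] Yn[of n] unfolding orth_to_def by blast+
  have "(\<integral>\<omega>. X \<omega> * (Y \<omega> - Yn n \<omega>) \<partial>M) = (\<integral>\<omega>. X \<omega> * Y \<omega> \<partial>M)" for n
    using XY XYn[of n] by (simp add: right_diff_distrib)
  moreover have "(\<lambda>n. \<integral>\<omega>. X \<omega> * (Y \<omega> - Yn n \<omega>) \<partial>M) \<longlonglongrightarrow> 0"
    using integral_mult_tendsto_zero[OF X X2 residual approx] .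
  ultimately have "(\<integral>\<omega>. X \<omega> * Y \<omega> \<partial>M) = 0"
    by (simp add: LIMSEQ_const_iff)
  with XY show "integrable M (\<lambda>\<omega>. X \<omega> * Y \<omega>) \<and> (\<integral>\<omega>. X \<omega> * Y \<omega> \<partial>M) = 0"
    by simp
qed

lemma gen_hilbert_generator:
  assumes "g \<in> G" "g \<in> borel_measurable M" "integrable M (\<lambda>\<omega>. (g \<omega>)\<^sup>2)"
  shows "g \<in> gen_hilbert M G"
proof -
  have "g \<in> lin_span_rv G"
    unfolding lin_span_rv_def
    by (intro CollectI exI[of _ "1::nat"] exI[of _ "\<lambda>_. 1"] exI[of _ "\<lambda>_. g"]) (simp add: assms(1))
  then show ?thesis
    unfolding gen_hilbert_def using assms by (auto intro!: exI[of _ "\<lambda>_. g"])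
qed

lemma zr_stack_Inl [simp]: "zr p u (stack z h) w t \<omega> $ Inl i = zr p u z w t \<omega> $ i"
  by (simp add: zr_def stack_def)

lemma zr_stack_Inr [simp]: "zr p u (stack z h) w t \<omega> $ Inr j = zr p u h w t \<omega> $ j"
  by (simp add: zr_def stack_def)

lemma stack_Inl [simp]: "stack z h t \<omega> $ Inl i = z t \<omega> $ i"
  by (simp add: stack_def)

lemma RC_integrable_zr:
  assumes "RC M p u L r" "w \<noteq> []"
  shows "integrable M (\<lambda>\<omega>. zr p u r w t \<omega> $ i)"
proof -
  have "\<forall>w t i. w \<noteq> [] \<longrightarrow> integrable M (\<lambda>\<omega>. zr p u r w t \<omega> $ i) \<and>
      (\<integral>\<omega>. zr p u r w t \<omega> $ i \<partial>M) = 0"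
    using assms(1) unfolding RC_def by (elim conjE) assumption
  with assms(2) show ?thesis
    by blast
qed

lemma RC_zr_second_moments:
  assumes "RC M p u L r" "w \<noteq> []" "v \<noteq> []"
  shows "integrable M (\<lambda>\<omega>. zr p u r w t \<omega> $ i * zr p u r v t \<omega> $ j)"
    and "(\<integral>\<omega>. zr p u r w t \<omega> $ i * zr p u r v t \<omega> $ j \<partial>M)
      = (\<integral>\<omega>. zr p u r w 0 \<omega> $ i * zr p u r v 0 \<omega> $ j \<partial>M)"
proof -
  have "\<forall>w v t i j. w \<noteq> [] \<longrightarrow> v \<noteq> [] \<longrightarrow>
      integrable M (\<lambda>\<omega>. zr p u r w t \<omega> $ i * zr p u r v t \<omega> $ j) \<and>
      (\<integral>\<omega>. zr p u r w t \<omega> $ i * zr p u r v t \<omega> $ j \<partial>M)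
      = (\<integral>\<omega>. zr p u r w 0 \<omega> $ i * zr p u r v 0 \<omega> $ j \<partial>M)"
    using assms(1) unfolding RC_def by (elim conjE) assumption
  with assms(2,3) show "integrable M (\<lambda>\<omega>. zr p u r w t \<omega> $ i * zr p u r v t \<omega> $ j)"
    and "(\<integral>\<omega>. zr p u r w t \<omega> $ i * zr p u r v t \<omega> $ j \<partial>M)
      = (\<integral>\<omega>. zr p u r w 0 \<omega> $ i * zr p u r v 0 \<omega> $ j \<partial>M)"
    by blast+
qed

lemma RC_Tmat_snoc:
  assumes "RC M p u L r" "w \<noteq> []" "v \<noteq> []" "w @ [\<sigma>] \<in> L \<or> v @ [\<sigma>] \<in> L"
  shows "Tmat M p u r (w @ [\<sigma>]) (v @ [\<sigma>]) = Tmat M p u r w v"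
  using assms unfolding RC_def by (elim conjE) (simp only: simp_thms)

lemma RC_Tmat_snoc_singleton:
  assumes "RC M p u L r" "w \<noteq> []"
  shows "Tmat M p u r (w @ [\<sigma>]) [\<sigma>] = transpose (Lmat M p u r w)"
  using assms unfolding RC_def by (elim conjE) (simp only: simp_thms)

lemma RC_Tmat_outside_L:
  assumes "RC M p u L r" "w \<noteq> []" "v \<noteq> []" "w \<notin> L \<or> v \<notin> L"
  shows "Tmat M p u r w v = 0"
  using assms unfolding RC_def by (elim conjE) (simp only: simp_thms)

lemma RC_stack_zr_measurable:
  assumes "RC M p u L (stack z h)" "w \<noteq> []"
  shows "(\<lambda>\<omega>. zr p u z w t \<omega> $ i) \<in> borel_measurable M"
    and "(\<lambda>\<omega>. zr p u h w t \<omega> $ j) \<in> borel_measurable M"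
  using RC_integrable_zr[OF assms, of t "Inl i"] RC_integrable_zr[OF assms, of t "Inr j"]
  by simp_all

lemma RC_stack_integrable_zr_mult:
  assumes "RC M p u L (stack z h)" "w \<noteq> []" "v \<noteq> []"
  shows "integrable M (\<lambda>\<omega>. zr p u z w t \<omega> $ i * zr p u z v t \<omega> $ i')"
    and "integrable M (\<lambda>\<omega>. zr p u h w t \<omega> $ j * zr p u h v t \<omega> $ j')"
  using RC_zr_second_moments(1)[OF assms, of t "Inl i" "Inl i'"]
    RC_zr_second_moments(1)[OF assms, of t "Inr j" "Inr j'"]
  by simp_all

lemma RC_stack_zr_h_in_Hspace:
  assumes "RC M p u L (stack z h)" "v \<noteq> []"
  shows "(\<lambda>\<omega>. zr p u h v t \<omega> $ j) \<in> Hspace M p u h t"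
  unfolding Hspace_def
proof (rule gen_hilbert_generator)
  show "(\<lambda>\<omega>. zr p u h v t \<omega> $ j) \<in> borel_measurable M"
    by (rule RC_stack_zr_measurable(2)[OF assms])
  show "integrable M (\<lambda>\<omega>. (zr p u h v t \<omega> $ j)\<^sup>2)"
    using RC_stack_integrable_zr_mult(2)[OF assms(1,2,2)] by (simp add: power2_eq_square)
qed (use assms(2) in blast)

lemma Tmat_stack_cross_block_eq_zero:
  assumes RC: "RC M p u L (stack z h)"
    and orth: "\<forall>t i. orth_to M (\<lambda>\<omega>. z t \<omega> $ i) (Hspace M p u h t)"
    and "w \<noteq> []" "v \<noteq> []"
  shows "Tmat M p u (stack z h) (v @ w) w $ Inr j $ Inl i = 0"
  using assms(3,4)
proof (induction w arbitrary: v rule: rev_induct)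
  case Nil
  then show ?case by simp
next
  case (snoc \<sigma> w)
  show ?case
  proof (cases "w = []")
    case True
    have "Tmat M p u (stack z h) (v @ [\<sigma>]) [\<sigma>] $ Inr j $ Inl i
        = transpose (Lmat M p u (stack z h) v) $ Inr j $ Inl i"
      by (simp only: RC_Tmat_snoc_singleton[OF RC snoc.prems(2)])
    also have "\<dots> = Lmat M p u (stack z h) v $ Inl i $ Inr j"
      by (simp only: transpose_def vec_lambda_beta)
    also have "\<dots> = (\<integral>\<omega>. z 0 \<omega> $ i * zr p u h v 0 \<omega> $ j \<partial>M)"
      by (simp add: Lmat_def)
    also have "\<dots> = 0"
      using bspec[OF orth[rule_format, of 0 i, unfolded orth_to_def]
          RC_stack_zr_h_in_Hspace[OF RC snoc.prems(2), of 0 j]]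
      by (rule conjunct2)
    finally show ?thesis
      using True by simp
  next
    case False
    show ?thesis
    proof (cases "(v @ w) @ [\<sigma>] \<in> L \<or> w @ [\<sigma>] \<in> L")
      case True
      have "v @ w \<noteq> []"
        using snoc.prems(2) by simp
      then have "Tmat M p u (stack z h) ((v @ w) @ [\<sigma>]) (w @ [\<sigma>]) = Tmat M p u (stack z h) (v @ w) w"
        using RC_Tmat_snoc[OF RC _ False True] by blast
      then show ?thesis
        using snoc.IH[OF False snoc.prems(2)] by simp
    next
      case False
      then have "Tmat M p u (stack z h) ((v @ w) @ [\<sigma>]) (w @ [\<sigma>]) = 0"
        using RC_Tmat_outside_L[OF RC] by simp
      then show ?thesis
        by simp
    qed
  qed
qed

lemma RC_stack_orth_to_Hspace_w_generators:
  assumes RC: "RC M p u L (stack z h)"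
    and orth: "\<forall>t i. orth_to M (\<lambda>\<omega>. z t \<omega> $ i) (Hspace M p u h t)"
    and w: "w \<noteq> []"
  shows "orth_to M (\<lambda>\<omega>. zr p u z w t \<omega> $ i) {\<lambda>\<omega>. zr p u h (v @ w) t \<omega> $ j | v j. v \<noteq> []}"
  unfolding orth_to_def
proof
  fix g assume "g \<in> {\<lambda>\<omega>. zr p u h (v @ w) t \<omega> $ j | v j. v \<noteq> []}"
  then obtain v j where g: "g = (\<lambda>\<omega>. zr p u h (v @ w) t \<omega> $ j)" and v: "v \<noteq> []"
    by blast
  have vw: "v @ w \<noteq> []"
    using v by simp
  have "(\<integral>\<omega>. zr p u z w t \<omega> $ i * g \<omega> \<partial>M)
      = (\<integral>\<omega>. zr p u (stack z h) w 0 \<omega> $ Inl i * zr p u (stack z h) (v @ w) 0 \<omega> $ Inr j \<partial>M)"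
    using RC_zr_second_moments(2)[OF RC w vw, of t "Inl i" "Inr j"] g by simp
  also have "\<dots> = Tmat M p u (stack z h) (v @ w) w $ Inr j $ Inl i"
    by (simp add: Tmat_def mult.commute)
  also have "\<dots> = 0"
    using Tmat_stack_cross_block_eq_zero[OF RC orth w v] .
  finally show "integrable M (\<lambda>\<omega>. zr p u z w t \<omega> $ i * g \<omega>)
      \<and> (\<integral>\<omega>. zr p u z w t \<omega> $ i * g \<omega> \<partial>M) = 0"
    using RC_zr_second_moments(1)[OF RC w vw, of t "Inl i" "Inr j"] g by simp
qed

theorem mainTheorem5:
  fixes M :: "'a measure"
    and p :: "'s::finite \<Rightarrow> real"
    and u :: "'s \<Rightarrow> int \<Rightarrow> 'a \<Rightarrow> real"
    and L :: "'s list set"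
    and z :: "int \<Rightarrow> 'a \<Rightarrow> real^'p::finite"
    and h :: "int \<Rightarrow> 'a \<Rightarrow> real^'l::finite"
  assumes "prob_space M"
    and "inputs_ok M p u"
    and "admissible M u L"
    and "RC M p u L (stack z h)"
    and "\<forall>t i. orth_to M (\<lambda>\<omega>. z t \<omega> $ i) (Hspace M p u h t)"
  shows "\<forall>w t i. w \<noteq> [] \<longrightarrow> orth_to M (\<lambda>\<omega>. zr p u z w t \<omega> $ i) (Hspace_w M p u h t w)"
proof (intro allI impI)
  fix w :: "'s list" and t i
  assume w: "w \<noteq> []"
  note RC = assms(4)
  show "orth_to M (\<lambda>\<omega>. zr p u z w t \<omega> $ i) (Hspace_w M p u h t w)"
    unfolding Hspace_w_def
  proof (rule orth_to_gen_hilbert)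
    show "(\<lambda>\<omega>. zr p u z w t \<omega> $ i) \<in> borel_measurable M"
      by (rule RC_stack_zr_measurable(1)[OF RC w])
    show "integrable M (\<lambda>\<omega>. (zr p u z w t \<omega> $ i)\<^sup>2)"
      using RC_stack_integrable_zr_mult(1)[OF RC w w] by (simp add: power2_eq_square)
    show "orth_to M (\<lambda>\<omega>. zr p u z w t \<omega> $ i) {\<lambda>\<omega>. zr p u h (v @ w) t \<omega> $ j | v j. v \<noteq> []}"
      by (rule RC_stack_orth_to_Hspace_w_generators[OF RC assms(5) w])
  qed (auto intro: RC_stack_zr_measurable(2)[OF RC] RC_stack_integrable_zr_mult(2)[OF RC])
qed

end
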